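(* Fix an integer $j\ge 0$. Define a function $\mathrm{suc}$ on triples of integers with $z\ge1$ recursively by \[\mathrm{suc}(x,y,1)=\{(2,y{+}1,1),(3,y{+}1,1),\ldots,(x{+}1,y{+}1,1)\}\cup\{(x,x{+}1,1),(x,x{+}2,1),\ldots,(x,y,1)\}\] (the second set being empty if $y\le x$), and for $z\geq 2$, \[\mathrm{suc}(x,y,z)=\{(2,y{+}1,z),(3,y{+}1,z),\ldots,(x{+}1,y{+}1,z)\}\cup \mathrm{suc}(x,y,z{-}1).\] Let $T$ be the rooted labeled tree whose root has label $(j{+}1,j{+}1,j{+}1)$ and in which a vertex with label $L$ has exactly one child with label $L'$ for each $L'\in \mathrm{suc}(L)$. Then $T$ is isomorphic as a rooted tree to $BT^j(1234)$.
   Context: $B_n$ is the group of permutations $w$ of $\{-n,\ldots,-1,1,\ldots,n\}$ with $w(-i)=-w(i)$; such $w$ is determined by $[w(-n),w(-n+1),\ldots,w(-1)]$. $w$ avoids $1234$ if there are no indices $-n\le a<b<c<d\le n$ (nonzero) with $w(a)<w(b)<w(c)<w(d)$. $B_n^j(1234)$ is the set of $1234$-avoiding $w\in B_n$ with $w(i)>0$ for exactly $j$ indices $i\in\{1,\ldots,n\}$. For $\ell\ge1$ let $\beta_\ell(x)=x$ if $|x|<\ell$, $\beta_\ell(x)=x-1$ if $x<-\ell$, $\beta_\ell(x)=x+1$ if $x>\ell$. For $w\in B_n$, $1\le i\le n+1$ and $1\le \ell\le n+1$, let $w^{-i}_\ell\in B_{n+1}$ be defined by $w^{-i}_\ell(-k)=\beta_\ell(w(-k+1))$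 for $i+1\le k\le n+1$, $w^{-i}_\ell(-i)=\ell$, $w^{-i}_\ell(-k)=\beta_\ell(w(-k))$ for $1\le k\le i-1$, extended by $w^{-i}_\ell(k)=-w^{-i}_\ell(-k)$. The tree $BT^j(1234)$ is the rooted tree whose vertices are signed permutations, with root the element $[-1,-2,\ldots,-j]$ of $B_j$ (i.e. $w(-k)=-(j+1-k)$ for $1\le k\le j$), and in which the children of a vertex $w\in B_n^j(1234)$ are all $w^{-i}_\ell$ with $1\le i\le n+1$ and $m<\ell\le n+1$ that avoid $1234$, where $m=\max(\{w(-k):1\le k\le n\}\cup\{0\})$. *)

theory Defs
  imports Main
begin

text \<open>Vertices are the root-paths [r, v1, ..., vk] with v(i+1) a child label of v(i);
  a vertex with label L has exactly one child for each element of the children set of L.\<close>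

definition gen_tree :: "'a \<Rightarrow> ('a \<Rightarrow> 'a set) \<Rightarrow> 'a list set" where
  "gen_tree r C = {p. p \<noteq> [] \<and> hd p = r \<and> (\<forall>i. Suc i < length p \<longrightarrow> p ! Suc i \<in> C (p ! i))}"

definition tree_child :: "'a list set \<Rightarrow> 'a list \<Rightarrow> 'a list \<Rightarrow> bool" where
  "tree_child V p q \<longleftrightarrow> p \<in> V \<and> q \<in> V \<and> (\<exists>x. q = p @ [x])"

definition rooted_tree_iso ::
  "'a list set \<Rightarrow> 'a list \<Rightarrow> 'b list set \<Rightarrow> 'b list \<Rightarrow> bool" where
  "rooted_tree_iso V1 r1 V2 r2 \<longleftrightarrow>
     (\<exists>f. bij_betw f V1 V2 \<and> f r1 = r2 \<and>
          (\<forall>p\<in>V1. \<forall>q\<in>V1. tree_child V1 p q \<longleftrightarrow> tree_child V2 (f p) (f q)))"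

fun suc_aux :: "int \<Rightarrow> int \<Rightarrow> nat \<Rightarrow> (int \<times> int \<times> int) set" where
  "suc_aux x y 0 = {}"
| "suc_aux x y (Suc 0) =
     {(k, y + 1, 1) | k. 2 \<le> k \<and> k \<le> x + 1} \<union> {(x, k, 1) | k. x + 1 \<le> k \<and> k \<le> y}"
| "suc_aux x y (Suc (Suc n)) =
     {(k, y + 1, int (Suc (Suc n))) | k. 2 \<le> k \<and> k \<le> x + 1} \<union> suc_aux x y (Suc n)"

definition suc_lab :: "int \<times> int \<times> int \<Rightarrow> (int \<times> int \<times> int) set" where
  "suc_lab L = (case L of (x, y, z) \<Rightarrow> if 1 \<le> z then suc_aux x y (nat z) else {})"

definition T_tree :: "nat \<Rightarrow> (int \<times> int \<times> int) list set" where
  "T_tree j = gen_tree (int j + 1, int j + 1, int j + 1) suc_lab"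

text \<open>An element of B_n is represented as a pair (n, w) with w :: int \<Rightarrow> int a bijection of
  {-n..n} - {0} satisfying w(-x) = -w(x), extended by the identity outside {-n..n}-{0}.\<close>

definition sdom :: "nat \<Rightarrow> int set" where
  "sdom n = {- int n .. int n} - {0}"

definition signed_perm :: "nat \<Rightarrow> (int \<Rightarrow> int) \<Rightarrow> bool" where
  "signed_perm n w \<longleftrightarrow> bij_betw w (sdom n) (sdom n) \<and> (\<forall>x. w (- x) = - w x)
     \<and> (\<forall>x. x \<notin> sdom n \<longrightarrow> w x = x)"

definition avoids_1234 :: "nat \<Rightarrow> (int \<Rightarrow> int) \<Rightarrow> bool" where
  "avoids_1234 n w \<longleftrightarrow> \<not> (\<exists>a b c d. a \<in> sdom n \<and> b \<in> sdom n \<and> c \<in> sdom n \<and> d \<in> sdom n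
      \<and> a < b \<and> b < c \<and> c < d \<and> w a < w b \<and> w b < w c \<and> w c < w d)"

definition in_Bj1234 :: "nat \<Rightarrow> nat \<Rightarrow> (int \<Rightarrow> int) \<Rightarrow> bool" where
  "in_Bj1234 j n w \<longleftrightarrow> signed_perm n w \<and> avoids_1234 n w
     \<and> card {i \<in> {1 .. int n}. w i > 0} = j"

definition beta :: "int \<Rightarrow> int \<Rightarrow> int" where
  "beta l x = (if \<bar>x\<bar> < l then x else if x < 0 then x - 1 else x + 1)"

text \<open>Values of w(-k) of the new permutation, for 1 \<le> k \<le> n+1.\<close>
definition ins_neg :: "(int \<Rightarrow> int) \<Rightarrow> int \<Rightarrow> int \<Rightarrow> int \<Rightarrow> int" where
  "ins_neg w i l k = (if i + 1 \<le> k then beta l (w (- k + 1))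
                      else if k = i then l else beta l (w (- k)))"

definition ins_perm :: "nat \<Rightarrow> (int \<Rightarrow> int) \<Rightarrow> int \<Rightarrow> int \<Rightarrow> nat \<times> (int \<Rightarrow> int)" where
  "ins_perm n w i l = (Suc n, (\<lambda>x. if - int (Suc n) \<le> x \<and> x < 0 then ins_neg w i l (- x)
                               else if 0 < x \<and> x \<le> int (Suc n) then - ins_neg w i l x
                               else x))"

definition max_neg :: "nat \<Rightarrow> (int \<Rightarrow> int) \<Rightarrow> int" where
  "max_neg n w = Max ({w (- k) | k. 1 \<le> k \<and> k \<le> int n} \<union> {0})"

definition BT_children :: "nat \<Rightarrow> nat \<times> (int \<Rightarrow> int) \<Rightarrow> (nat \<times> (int \<Rightarrow> int)) set" where
  "BT_children j v = (case v of (n, w) \<Rightarrow>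
     if in_Bj1234 j n w then
       {ins_perm n w i l | i l. 1 \<le> i \<and> i \<le> int n + 1 \<and> max_neg n w < l \<and> l \<le> int n + 1
                               \<and> avoids_1234 (Suc n) (snd (ins_perm n w i l))}
     else {})"

definition BT_root :: "nat \<Rightarrow> nat \<times> (int \<Rightarrow> int)" where
  "BT_root j = (j, (\<lambda>x. if - int j \<le> x \<and> x < 0 then - (int j + 1) - x
                      else if 0 < x \<and> x \<le> int j then int j + 1 - x else x))"

definition BT_tree :: "nat \<Rightarrow> (nat \<times> (int \<Rightarrow> int)) list set" where
  "BT_tree j = gen_tree (BT_root j) (BT_children j)"

end

theory Submission
  imports Defs
begin

text \<open>
  A vertex w \<in> B_n of BT^j(1234) is labelled by (n + 2 - t_x, n + 2 - t_y, n + 1 - m), where m is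
  the largest entry of its negative half and t_x (resp. t_y) is the least i such that the prefix
  [w(-n), ..., w(-i)] of the one-line notation is decreasing (resp. avoids 123).

  Along the tree, an entry greater than m at a positive position never starts an ascent. Insert
  l > m at position -i. By the symmetry w(-x) = -w(x), a 1234 of the child that uses one of the
  new entries at i and -i can be reflected to one that uses -i, and there all later letters of the
  pattern exceed l, so they sit at positive positions and at most one of them occurs. Hence the
  child avoids 1234 iff l \<le> n and [w(-n), ..., w(-i)] is decreasing, or l = n + 1 and it avoids
  123, i.e. iff t_x \<le> i resp. t_y \<le> i. Computing t_x and t_y of the child from i, t_x and t_y
  shows that the labels of the children are exactly the elements of suc of the parent's label,
  each taken once, so mapping a root path of BT^j(1234) to its sequence of labels is the
  isomorphism.
\<close>

section \<open>Trees generated by a children function\<close>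

lemma snoc_in_gen_tree_iff:
  "p @ [x] \<in> gen_tree r C \<longleftrightarrow> (p = [] \<and> x = r) \<or> (p \<in> gen_tree r C \<and> x \<in> C (last p))"
proof (cases "p = []")
  case False
  have "(\<forall>k. Suc k < length (p @ [x]) \<longrightarrow> (p @ [x]) ! Suc k \<in> C ((p @ [x]) ! k)) \<longleftrightarrow>
        (\<forall>k. Suc k < length p \<longrightarrow> p ! Suc k \<in> C (p ! k)) \<and> x \<in> C (last p)"
    using False by (auto simp: nth_append last_conv_nth less_Suc_eq) (metis diff_Suc_Suc diff_zero)
  then show ?thesis
    using False by (simp add: gen_tree_def)
qed (auto simp: gen_tree_def)

lemma gen_tree_induct [consumes 1, case_names root snoc]:
  assumes "p \<in> gen_tree r C"
    and "Q [r]"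
    and "\<And>p x. p \<in> gen_tree r C \<Longrightarrow> x \<in> C (last p) \<Longrightarrow> Q p \<Longrightarrow> Q (p @ [x])"
  shows "Q p"
  using assms(1)
proof (induction p rule: rev_induct)
  case (snoc x p)
  then show ?case
    using assms(2,3) by (auto simp: snoc_in_gen_tree_iff)
qed (simp add: gen_tree_def)

lemma rooted_tree_iso_sym:
  assumes iso: "rooted_tree_iso V r W s" and r: "r \<in> V"
  shows "rooted_tree_iso W s V r"
proof -
  obtain f where f: "bij_betw f V W" "f r = s"
    and child: "\<And>p q. p \<in> V \<Longrightarrow> q \<in> V \<Longrightarrow> tree_child V p q \<longleftrightarrow> tree_child W (f p) (f q)"
    using iso unfolding rooted_tree_iso_def by blast
  define g where "g = inv_into V f"
  have g: "bij_betw g W V" "g s = r"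
    using f r bij_betw_inv_into bij_betw_inv_into_left unfolding g_def by fastforce+
  have "tree_child W p q \<longleftrightarrow> tree_child V (g p) (g q)" if "p \<in> W" "q \<in> W" for p q
    using child[of "g p" "g q"] that f(1) g(1) unfolding g_def
    by (simp add: bij_betw_apply bij_betw_inv_into_right)
  with g show ?thesis
    unfolding rooted_tree_iso_def by blast
qed

locale tree_relabelling =
  fixes r :: 'a and C :: "'a \<Rightarrow> 'a set" and r' :: 'b and C' :: "'b \<Rightarrow> 'b set"
    and P :: "'a \<Rightarrow> bool" and \<phi> :: "'a \<Rightarrow> 'b"
  assumes P_root: "P r" and \<phi>_root: "\<phi> r = r'"
    and P_child: "P v \<Longrightarrow> c \<in> C v \<Longrightarrow> P c"
    and bij_children: "P v \<Longrightarrow> bij_betw \<phi> (C v) (C' (\<phi> v))"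
begin

lemma P_last: "p \<in> gen_tree r C \<Longrightarrow> P (last p)"
  by (induction p rule: gen_tree_induct) (auto intro: P_root P_child)

lemma map_in_gen_tree: "p \<in> gen_tree r C \<Longrightarrow> map \<phi> p \<in> gen_tree r' C'"
proof (induction p rule: gen_tree_induct)
  case root
  then show ?case using \<phi>_root by (simp add: gen_tree_def)
next
  case (snoc p x)
  then have "p \<noteq> []" by (auto simp: gen_tree_def)
  moreover have "\<phi> x \<in> C' (\<phi> (last p))"
    using bij_children[OF P_last[OF snoc(1)]] snoc(2) by (auto dest: bij_betw_apply)
  ultimately show ?case
    using snoc by (simp add: snoc_in_gen_tree_iff last_map)
qed

lemma inj_on_map: "inj_on (map \<phi>) (gen_tree r C)"
proof -
  have "\<forall>q \<in> gen_tree r C. map \<phi> p = map \<phi> q \<longrightarrow> p = q" if "p \<in> gen_tree r C" for p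
    using that
  proof (induction p rule: gen_tree_induct)
    case root
    then show ?case by (auto simp: gen_tree_def Cons_eq_map_conv)
  next
    case (snoc p x)
    show ?case
    proof (intro ballI impI)
      fix q assume q: "q \<in> gen_tree r C" and eq: "map \<phi> (p @ [x]) = map \<phi> q"
      obtain q0 y where "q = q0 @ [y]"
        using eq by (cases q rule: rev_cases) auto
      with eq have qy: "q = q0 @ [y]" "map \<phi> p = map \<phi> q0" "\<phi> x = \<phi> y"
        by auto
      have "p \<noteq> []" using snoc(1) by (auto simp: gen_tree_def)
      then have "q0 \<in> gen_tree r C" "y \<in> C (last q0)"
        using q qy by (auto simp: snoc_in_gen_tree_iff)
      then have "q0 = p" using snoc.IH qy(2) by metis
      with snoc(2) qy \<open>y \<in> C (last q0)\<close> have "y = x"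
        using bij_children[OF P_last[OF snoc(1)]] by (auto simp: bij_betw_def dest: inj_onD)
      with qy \<open>q0 = p\<close> show "p @ [x] = q" by simp
    qed
  qed
  then show ?thesis by (auto intro: inj_onI)
qed

lemma map_onto_gen_tree: "q \<in> gen_tree r' C' \<Longrightarrow> q \<in> map \<phi> ` gen_tree r C"
proof (induction q rule: gen_tree_induct)
  case root
  have "[r] \<in> gen_tree r C" by (simp add: gen_tree_def)
  then show ?case using \<phi>_root by force
next
  case (snoc q a)
  then obtain p where p: "p \<in> gen_tree r C" "q = map \<phi> p" by blast
  then have "p \<noteq> []" by (auto simp: gen_tree_def)
  then have "a \<in> \<phi> ` C (last p)"
    using snoc(2) p bij_children[OF P_last[OF p(1)]] by (simp add: bij_betw_def last_map)
  then obtain x where "x \<in> C (last p)" "a = \<phi> x" by blast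
  with p have "p @ [x] \<in> gen_tree r C" "q @ [a] = map \<phi> (p @ [x])"
    by (auto simp: snoc_in_gen_tree_iff)
  then show ?case by blast
qed

lemma bij_betw_map: "bij_betw (map \<phi>) (gen_tree r C) (gen_tree r' C')"
  unfolding bij_betw_def using inj_on_map map_in_gen_tree map_onto_gen_tree by blast

lemma tree_child_map_iff:
  assumes p: "p \<in> gen_tree r C" and q: "q \<in> gen_tree r C"
  shows "tree_child (gen_tree r' C') (map \<phi> p) (map \<phi> q) \<longleftrightarrow> tree_child (gen_tree r C) p q"
proof
  assume "tree_child (gen_tree r' C') (map \<phi> p) (map \<phi> q)"
  then obtain a where a: "map \<phi> q = map \<phi> p @ [a]" by (auto simp: tree_child_def)
  then obtain p' x where "q = p' @ [x]"
    by (cases q rule: rev_cases) auto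
  with a have p': "q = p' @ [x]" "map \<phi> p' = map \<phi> p"
    by auto
  have "p \<noteq> []" using p by (auto simp: gen_tree_def)
  then have "p' \<in> gen_tree r C"
    using q p' by (auto simp: snoc_in_gen_tree_iff)
  then have "p' = p"
    using inj_on_map p p' by (auto dest: inj_onD)
  then show "tree_child (gen_tree r C) p q"
    using p q p' by (auto simp: tree_child_def)
next
  assume "tree_child (gen_tree r C) p q"
  then show "tree_child (gen_tree r' C') (map \<phi> p) (map \<phi> q)"
    using p q by (auto simp: tree_child_def intro: map_in_gen_tree)
qed

theorem rooted_tree_iso_gen_tree: "rooted_tree_iso (gen_tree r' C') [r'] (gen_tree r C) [r]"
proof (rule rooted_tree_iso_sym)
  show "rooted_tree_iso (gen_tree r C) [r] (gen_tree r' C') [r']"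
    unfolding rooted_tree_iso_def
    using bij_betw_map \<phi>_root
    by (intro exI[of _ "map \<phi>"] conjI ballI) (simp_all add: tree_child_map_iff)
  show "[r] \<in> gen_tree r C" by (simp add: gen_tree_def)
qed

end

lemma sdom_iff: "x \<in> sdom n \<longleftrightarrow> x \<noteq> 0 \<and> - int n \<le> x \<and> x \<le> int n"
  by (auto simp: sdom_def)

lemma finite_sdom [simp]: "finite (sdom n)"
  by (simp add: sdom_def)

lemma uminus_in_sdom: "x \<in> sdom n \<Longrightarrow> - x \<in> sdom n"
  by (auto simp: sdom_iff)

lemma signed_perm_uminus: "signed_perm n w \<Longrightarrow> w (- x) = - w x"
  by (simp add: signed_perm_def)

lemma signed_perm_in_sdom: "signed_perm n w \<Longrightarrow> x \<in> sdom n \<Longrightarrow> w x \<in> sdom n"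
  by (auto simp: signed_perm_def bij_betw_def)

lemma signed_perm_inj:
  "signed_perm n w \<Longrightarrow> x \<in> sdom n \<Longrightarrow> y \<in> sdom n \<Longrightarrow> w x = w y \<Longrightarrow> x = y"
  by (auto simp: signed_perm_def bij_betw_def dest: inj_onD)

lemma signed_perm_onto: "signed_perm n w \<Longrightarrow> y \<in> sdom n \<Longrightarrow> \<exists>x\<in>sdom n. w x = y"
  unfolding signed_perm_def bij_betw_def by (metis imageE)

lemma signed_permI:
  assumes "inj_on w (sdom n)" "\<And>x. x \<in> sdom n \<Longrightarrow> w x \<in> sdom n"
    and "\<And>x. w (- x) = - w x" and "\<And>x. x \<notin> sdom n \<Longrightarrow> w x = x"
  shows "signed_perm n w"
proof -
  have "w ` sdom n = sdom n"
    using assms(1,2) by (intro endo_inj_surj) auto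
  with assms show ?thesis
    unfolding signed_perm_def bij_betw_def by blast
qed

lemma beta_less_beta_iff: "beta l x < beta l y \<longleftrightarrow> x < y"
  by (auto simp: beta_def)

lemma beta_eq_beta_iff: "beta l x = beta l y \<longleftrightarrow> x = y"
  by (auto simp: beta_def)

lemma beta_uminus: "1 \<le> l \<Longrightarrow> beta l (- x) = - beta l x"
  by (auto simp: beta_def)

lemma abs_beta_neq: "\<bar>beta l x\<bar> \<noteq> l"
  by (auto simp: beta_def)

lemma beta_pos_iff: "1 \<le> l \<Longrightarrow> 0 < beta l x \<longleftrightarrow> 0 < x"
  by (auto simp: beta_def)

lemma beta_less: "x < l \<Longrightarrow> 1 \<le> l \<Longrightarrow> beta l x < l"
  by (auto simp: beta_def)

lemma beta_in_sdom: "x \<in> sdom n \<Longrightarrow> 1 \<le> l \<Longrightarrow> beta l x \<in> sdom (Suc n)"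
  by (auto simp: beta_def sdom_iff)

lemma max_neg_eq_Max: "max_neg n w = Max ((\<lambda>k. w (- k)) ` {1..int n} \<union> {0})"
proof -
  have "{w (- k) | k. 1 \<le> k \<and> k \<le> int n} = (\<lambda>k. w (- k)) ` {1..int n}"
    by auto
  then show ?thesis by (simp add: max_neg_def)
qed

lemma le_max_neg: "1 \<le> k \<Longrightarrow> k \<le> int n \<Longrightarrow> w (- k) \<le> max_neg n w"
  unfolding max_neg_eq_Max by (rule Max_ge) auto

lemma max_neg_nonneg: "0 \<le> max_neg n w"
  unfolding max_neg_eq_Max by (rule Max_ge) auto

lemma max_neg_eqI:
  assumes "\<And>k. 1 \<le> k \<Longrightarrow> k \<le> int n \<Longrightarrow> w (- k) \<le> M" and "0 \<le> M"
    and "1 \<le> i" "i \<le> int n" "w (- i) = M"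
  shows "max_neg n w = M"
proof -
  have "M \<in> (\<lambda>k. w (- k)) ` {1..int n}"
    using assms(3-5) by force
  then show ?thesis
    unfolding max_neg_eq_Max by (intro Max_eqI) (use assms(1,2) in auto)
qed

lemma max_neg_le:
  assumes "signed_perm n w" shows "max_neg n w \<le> int n"
proof -
  have "max_neg n w \<in> (\<lambda>k. w (- k)) ` {1..int n} \<union> {0}"
    unfolding max_neg_eq_Max by (rule Max_in) auto
  then show ?thesis
    using signed_perm_in_sdom[OF assms] by (auto simp: sdom_iff)
qed

section \<open>Prefix statistics and labels\<close>

lemma card_upward_closed:
  fixes t N :: int
  assumes "\<And>i. 1 \<le> i \<Longrightarrow> i \<le> N \<Longrightarrow> Q i \<longleftrightarrow> t \<le> i" "1 \<le> t" "t \<le> N + 1"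
  shows "int (card {i \<in> {1..N}. Q i}) = N + 1 - t"
proof -
  have "{i \<in> {1..N}. Q i} = {t..N}" using assms by auto
  then show ?thesis using assms by simp
qed

lemma upward_closed_threshold:
  fixes N :: int
  assumes "\<And>i i'. 1 \<le> i \<Longrightarrow> i \<le> i' \<Longrightarrow> Q i \<Longrightarrow> Q i'" "Q N" "1 \<le> N"
  obtains t where "1 \<le> t" "t \<le> N" "\<And>i. 1 \<le> i \<Longrightarrow> i \<le> N \<Longrightarrow> Q i \<longleftrightarrow> t \<le> i"
proof
  let ?S = "{i \<in> {1..N}. Q i}"
  have fin: "finite ?S" by (rule finite_subset[of _ "{1..N}"]) auto
  moreover have "N \<in> ?S" using assms by auto
  ultimately have Min: "Min ?S \<in> ?S" by (intro Min_in) auto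
  then show "1 \<le> Min ?S" "Min ?S \<le> N" by auto
  show "Q i \<longleftrightarrow> Min ?S \<le> i" if "1 \<le> i" "i \<le> N" for i
    using that fin Min assms(1) by (auto intro: Min_le)
qed

text \<open>In the one-line notation [w(-n), ..., w(-1)], these say that the prefix ending with
  w(-i) is decreasing, resp. contains no pattern 123.\<close>

definition decreasing_prefix :: "nat \<Rightarrow> (int \<Rightarrow> int) \<Rightarrow> int \<Rightarrow> bool" where
  "decreasing_prefix n w i \<longleftrightarrow> (\<forall>a b. i \<le> a \<longrightarrow> a < b \<longrightarrow> b \<le> int n \<longrightarrow> w (- a) < w (- b))"

definition prefix_avoids_123 :: "nat \<Rightarrow> (int \<Rightarrow> int) \<Rightarrow> int \<Rightarrow> bool" where
  "prefix_avoids_123 n w i \<longleftrightarrow> \<not> (\<exists>a b c. i \<le> a \<and> a < b \<and> b < c \<and> c \<le> int n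
       \<and> w (- c) < w (- b) \<and> w (- b) < w (- a))"

lemma decreasing_prefixD:
  "decreasing_prefix n w i \<Longrightarrow> i \<le> a \<Longrightarrow> a < b \<Longrightarrow> b \<le> int n \<Longrightarrow> w (- a) < w (- b)"
  unfolding decreasing_prefix_def by blast

lemma prefix_avoids_123D:
  "prefix_avoids_123 n w i \<Longrightarrow> i \<le> a \<Longrightarrow> a < b \<Longrightarrow> b < c \<Longrightarrow> c \<le> int n \<Longrightarrow>
     w (- c) < w (- b) \<Longrightarrow> w (- b) < w (- a) \<Longrightarrow> False"
  unfolding prefix_avoids_123_def by blast

lemma decreasing_prefix_imp_avoids_123: "decreasing_prefix n w i \<Longrightarrow> prefix_avoids_123 n w i"
  unfolding decreasing_prefix_def prefix_avoids_123_def by force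

lemma decreasing_prefix_mono: "decreasing_prefix n w i \<Longrightarrow> i \<le> i' \<Longrightarrow> decreasing_prefix n w i'"
  unfolding decreasing_prefix_def by force

lemma prefix_avoids_123_mono: "prefix_avoids_123 n w i \<Longrightarrow> i \<le> i' \<Longrightarrow> prefix_avoids_123 n w i'"
  unfolding prefix_avoids_123_def by force

lemma decreasing_prefix_empty: "decreasing_prefix n w (int n + 1)"
  unfolding decreasing_prefix_def by auto

definition label :: "nat \<Rightarrow> (int \<Rightarrow> int) \<Rightarrow> int \<times> int \<times> int" where
  "label n w = (int (card {i \<in> {1..int n + 1}. decreasing_prefix n w i}),
                int (card {i \<in> {1..int n + 1}. prefix_avoids_123 n w i}),
                int n + 1 - max_neg n w)"

definition prefix_thresholds :: "nat \<Rightarrow> (int \<Rightarrow> int) \<Rightarrow> int \<Rightarrow> int \<Rightarrow> bool" where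
  "prefix_thresholds n w tx ty \<longleftrightarrow> 1 \<le> tx \<and> tx \<le> int n + 1 \<and> 1 \<le> ty \<and> ty \<le> int n + 1
     \<and> (\<forall>i \<in> {1..int n + 1}. decreasing_prefix n w i \<longleftrightarrow> tx \<le> i)
     \<and> (\<forall>i \<in> {1..int n + 1}. prefix_avoids_123 n w i \<longleftrightarrow> ty \<le> i)"

lemma prefix_thresholds_exist: "\<exists>tx ty. prefix_thresholds n w tx ty"
proof -
  obtain tx where "1 \<le> tx" "tx \<le> int n + 1"
    "\<And>i. 1 \<le> i \<Longrightarrow> i \<le> int n + 1 \<Longrightarrow> decreasing_prefix n w i \<longleftrightarrow> tx \<le> i"
    by (rule upward_closed_threshold[of "decreasing_prefix n w" "int n + 1"])
      (auto intro: decreasing_prefix_mono decreasing_prefix_empty)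
  moreover obtain ty where "1 \<le> ty" "ty \<le> int n + 1"
    "\<And>i. 1 \<le> i \<Longrightarrow> i \<le> int n + 1 \<Longrightarrow> prefix_avoids_123 n w i \<longleftrightarrow> ty \<le> i"
    by (rule upward_closed_threshold[of "prefix_avoids_123 n w" "int n + 1"])
      (auto intro: prefix_avoids_123_mono decreasing_prefix_imp_avoids_123 decreasing_prefix_empty)
  ultimately show ?thesis
    unfolding prefix_thresholds_def by auto
qed

lemma prefix_thresholds_le:
  assumes "prefix_thresholds n w tx ty" shows "ty \<le> tx"
proof -
  have "decreasing_prefix n w tx"
    using assms by (simp add: prefix_thresholds_def)
  then have "prefix_avoids_123 n w tx"
    by (rule decreasing_prefix_imp_avoids_123)
  then show ?thesis
    using assms by (simp add: prefix_thresholds_def)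
qed

lemma label_eq:
  assumes "prefix_thresholds n w tx ty"
  shows "label n w = (int n + 2 - tx, int n + 2 - ty, int n + 1 - max_neg n w)"
proof -
  have "int (card {i \<in> {1..int n + 1}. decreasing_prefix n w i}) = int n + 1 + 1 - tx"
    by (rule card_upward_closed) (use assms in \<open>auto simp: prefix_thresholds_def\<close>)
  moreover have "int (card {i \<in> {1..int n + 1}. prefix_avoids_123 n w i}) = int n + 1 + 1 - ty"
    by (rule card_upward_closed) (use assms in \<open>auto simp: prefix_thresholds_def\<close>)
  ultimately show ?thesis
    by (simp add: label_def)
qed

lemma suc_aux_Suc:
  "suc_aux x y (Suc k) =
     {(a, y + 1, z) | a z. 2 \<le> a \<and> a \<le> x + 1 \<and> 1 \<le> z \<and> z \<le> int (Suc k)}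
     \<union> {(x, a, 1) | a. x + 1 \<le> a \<and> a \<le> y}"
proof (induction k)
  case (Suc k)
  have "suc_aux x y (Suc (Suc k)) =
      {(a, y + 1, int (Suc (Suc k))) | a. 2 \<le> a \<and> a \<le> x + 1} \<union> suc_aux x y (Suc k)"
    by simp
  also have "\<dots> = {(a, y + 1, z) | a z. 2 \<le> a \<and> a \<le> x + 1 \<and> 1 \<le> z \<and> z \<le> int (Suc (Suc k))}
      \<union> {(x, a, 1) | a. x + 1 \<le> a \<and> a \<le> y}"
    unfolding Suc.IH by auto
  finally show ?case .
qed auto

definition admissible_sites :: "int \<Rightarrow> int \<Rightarrow> int \<Rightarrow> int \<Rightarrow> (int \<times> int) set" where
  "admissible_sites n tx ty m = {(i, l). 1 \<le> i \<and> i \<le> n + 1 \<and> m < l \<and> l \<le> n + 1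
      \<and> ((l \<le> n \<and> tx \<le> i) \<or> (l = n + 1 \<and> ty \<le> i))}"

definition child_label :: "int \<Rightarrow> int \<Rightarrow> int \<Rightarrow> int \<times> int \<Rightarrow> int \<times> int \<times> int" where
  "child_label n tx ty = (\<lambda>(i, l).
     (if i = n + 1 then n + 3 - tx else if tx \<le> i then n + 2 - i else n + 2 - tx,
      if tx \<le> i then n + 3 - ty else n + 2 - i,
      n + 2 - l))"

lemma inj_on_child_label:
  assumes "1 \<le> ty" "ty \<le> tx" "tx \<le> n + 1"
  shows "inj_on (child_label n tx ty) (admissible_sites n tx ty m)"
proof
  fix p q
  assume "p \<in> admissible_sites n tx ty m" "q \<in> admissible_sites n tx ty m"
    and "child_label n tx ty p = child_label n tx ty q"
  then show "p = q"
    using assms unfolding child_label_def admissible_sites_def by (auto split: if_splits)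
qed

lemma child_label_image:
  assumes "1 \<le> ty" "ty \<le> tx" "tx \<le> n + 1" "0 \<le> m" "m \<le> n"
  shows "child_label n tx ty ` admissible_sites n tx ty m
           = suc_aux (n + 2 - tx) (n + 2 - ty) (nat (n + 1 - m))"
    (is "?L = ?R")
proof -
  define k where "k = nat (n - m)"
  have k: "nat (n + 1 - m) = Suc k" "int (Suc k) = n + 1 - m"
    using assms by (simp_all add: k_def)
  have "?L \<subseteq> ?R"
    using assms unfolding k suc_aux_Suc child_label_def admissible_sites_def by (auto split: if_splits)
  moreover have "t \<in> ?L" if "t \<in> ?R" for t
  proof -
    consider a z where "t = (a, n + 3 - ty, z)" "2 \<le> a" "a \<le> n + 3 - tx" "1 \<le> z" "z \<le> n + 1 - m"
      | a where "t = (n + 2 - tx, a, 1)" "n + 3 - tx \<le> a" "a \<le> n + 2 - ty"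
      using \<open>t \<in> ?R\<close> unfolding k suc_aux_Suc by fastforce
    then show ?thesis
    proof cases
      case (1 a z)
      let ?i = "if a = n + 3 - tx then n + 1 else n + 2 - a"
      have "(?i, n + 2 - z) \<in> admissible_sites n tx ty m" "t = child_label n tx ty (?i, n + 2 - z)"
        using 1 assms unfolding admissible_sites_def child_label_def by auto
      then show ?thesis by blast
    next
      case (2 a)
      have "(n + 2 - a, n + 1) \<in> admissible_sites n tx ty m" "t = child_label n tx ty (n + 2 - a, n + 1)"
        using 2 assms unfolding admissible_sites_def child_label_def by auto
      then show ?thesis by blast
    qed
  qed
  ultimately show ?thesis by blast
qed

section \<open>Inserting a new largest negative-half entry\<close>

definition occurrence_1234 :: "nat \<Rightarrow> (int \<Rightarrow> int) \<Rightarrow> int \<Rightarrow> int \<Rightarrow> int \<Rightarrow> int \<Rightarrow> bool" where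
  "occurrence_1234 n w a b c d \<longleftrightarrow> a \<in> sdom n \<and> b \<in> sdom n \<and> c \<in> sdom n \<and> d \<in> sdom n
     \<and> a < b \<and> b < c \<and> c < d \<and> w a < w b \<and> w b < w c \<and> w c < w d"

lemma avoids_1234_iff: "avoids_1234 n w \<longleftrightarrow> (\<forall>a b c d. \<not> occurrence_1234 n w a b c d)"
  unfolding avoids_1234_def occurrence_1234_def by blast

lemma occurrence_1234_reflect:
  assumes "occurrence_1234 n w a b c d" "\<And>x. w (- x) = - w x"
  shows "occurrence_1234 n w (- d) (- c) (- b) (- a)"
  using assms by (simp add: occurrence_1234_def uminus_in_sdom)

definition bounded_ascents :: "nat \<Rightarrow> (int \<Rightarrow> int) \<Rightarrow> bool" where
  "bounded_ascents n w \<longleftrightarrow>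
     (\<forall>p q. 1 \<le> p \<longrightarrow> p < q \<longrightarrow> q \<le> int n \<longrightarrow> w p < w q \<longrightarrow> w p \<le> max_neg n w)"

locale tree_node =
  fixes j n :: nat and w :: "int \<Rightarrow> int"
  assumes in_B: "in_Bj1234 j n w" and bounded_ascents: "bounded_ascents n w"
begin

lemma signed_perm: "signed_perm n w"
  using in_B by (simp add: in_Bj1234_def)

lemma avoids: "avoids_1234 n w"
  using in_B by (simp add: in_Bj1234_def)

lemma w_uminus: "w (- x) = - w x"
  using signed_perm by (rule signed_perm_uminus)

lemma w_in_sdom: "x \<in> sdom n \<Longrightarrow> w x \<in> sdom n"
  using signed_perm by (rule signed_perm_in_sdom)

lemma w_inj: "x \<in> sdom n \<Longrightarrow> y \<in> sdom n \<Longrightarrow> w x = w y \<Longrightarrow> x = y"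
  using signed_perm by (rule signed_perm_inj)

lemma w_neg_le_max_neg: "x \<in> sdom n \<Longrightarrow> x < 0 \<Longrightarrow> w x \<le> max_neg n w"
  using le_max_neg[of "- x" n w] by (auto simp: sdom_iff)

end

locale insertion = tree_node +
  fixes i l :: int
  assumes i_ge: "1 \<le> i" and i_le: "i \<le> int n + 1"
    and l_gt: "max_neg n w < l" and l_le: "l \<le> int n + 1"
begin

definition W :: "int \<Rightarrow> int" where
  "W = snd (ins_perm n w i l)"

text \<open>The position of W that carries the (renumbered) entry of w at position x.\<close>
definition shift :: "int \<Rightarrow> int" where
  "shift x = (if x \<le> - i then x - 1 else if i \<le> x then x + 1 else x)"

lemma l_ge: "1 \<le> l"
  using l_gt max_neg_nonneg[of n w] by simp

lemma W_neg: "1 \<le> k \<Longrightarrow> k \<le> int n + 1 \<Longrightarrow> W (- k) = ins_neg w i l k"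
  by (simp add: W_def ins_perm_def)

lemma W_pos: "1 \<le> k \<Longrightarrow> k \<le> int n + 1 \<Longrightarrow> W k = - ins_neg w i l k"
  by (simp add: W_def ins_perm_def)

lemma W_outside: "x \<notin> sdom (Suc n) \<Longrightarrow> W x = x"
  by (auto simp: W_def ins_perm_def sdom_iff)

lemma W_uminus: "W (- x) = - W x"
  by (auto simp: W_def ins_perm_def)

lemma W_neg_i: "W (- i) = l"
  using i_ge i_le by (simp add: W_neg ins_neg_def)

lemma W_i: "W i = - l"
  using i_ge i_le by (simp add: W_pos ins_neg_def)

lemma W_shift:
  assumes "x \<in> sdom n" shows "W (shift x) = beta l (w x)"
proof (cases "x < 0")
  case True
  then show ?thesis
    using assms i_ge W_neg[of "- shift x"] by (auto simp: shift_def ins_neg_def sdom_iff)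
next
  case False
  then have "W (shift x) = - ins_neg w i l (shift x)"
    using assms i_ge W_pos[of "shift x"] by (auto simp: shift_def sdom_iff)
  also have "\<dots> = beta l (w x)"
    using False assms i_ge
    by (auto simp: shift_def ins_neg_def sdom_iff w_uminus beta_uminus[OF l_ge])
  finally show ?thesis .
qed

lemma W_neg_shift: "1 \<le> k \<Longrightarrow> k \<le> int n \<Longrightarrow> W (shift (- k)) = beta l (w (- k))"
  by (rule W_shift) (simp add: sdom_iff)

lemma shift_less_iff: "shift x < shift y \<longleftrightarrow> x < y"
  using i_ge by (auto simp: shift_def)

lemma shift_in_sdom: "x \<in> sdom n \<Longrightarrow> shift x \<in> sdom (Suc n)"
  using i_ge by (auto simp: shift_def sdom_iff)

lemma shift_neg_iff: "x \<in> sdom n \<Longrightarrow> shift x < 0 \<longleftrightarrow> x < 0"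
  using i_ge by (auto simp: shift_def sdom_iff)

lemma shift_less_neg_i_iff: "shift x < - i \<longleftrightarrow> x \<le> - i"
  using i_ge by (auto simp: shift_def)

lemma sdom_Suc_cases:
  assumes "X \<in> sdom (Suc n)"
  obtains "X = - i" | "X = i" | x where "x \<in> sdom n" "X = shift x"
proof -
  assume neg: "X = - i \<Longrightarrow> thesis" and pos: "X = i \<Longrightarrow> thesis"
    and old: "\<And>x. x \<in> sdom n \<Longrightarrow> X = shift x \<Longrightarrow> thesis"
  define x where "x = (if X < - i then X + 1 else if i < X then X - 1 else X)"
  show thesis
  proof (cases "X = - i \<or> X = i")
    case False
    then have "x \<in> sdom n" "X = shift x"
      using assms i_ge i_le by (auto simp: x_def shift_def sdom_iff)
    then show thesis by (rule old)
  qed (use neg pos in blast)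
qed

lemma W_neg_le:
  assumes "X \<in> sdom (Suc n)" "X < 0" shows "W X \<le> l"
  using assms(1)
proof (cases rule: sdom_Suc_cases)
  case (3 x)
  then have "w x < l"
    using assms shift_neg_iff w_neg_le_max_neg l_gt by fastforce
  then show ?thesis
    using 3 W_shift beta_less l_ge by fastforce
qed (use assms i_ge W_neg_i in auto)

lemma W_gt_l:
  assumes "X \<in> sdom (Suc n)" "l < W X"
  obtains x where "x \<in> sdom n" "X = shift x" "0 < x" "l \<le> w x" "l \<le> int n"
  using assms(1)
proof (cases rule: sdom_Suc_cases)
  case (3 x)
  have "0 < x"
    using assms W_neg_le 3 shift_neg_iff by (fastforce simp: sdom_iff)
  moreover have "l \<le> w x"
    using assms 3 W_shift l_ge by (auto simp: beta_def split: if_splits)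
  moreover have "w x \<le> int n"
    using w_in_sdom[OF 3(1)] by (simp add: sdom_iff)
  ultimately show ?thesis using 3 that by simp
qed (use assms W_neg_i W_i l_ge in auto)

definition admissible :: bool where
  "admissible \<longleftrightarrow> (l \<le> int n \<and> decreasing_prefix n w i) \<or> (l = int n + 1 \<and> prefix_avoids_123 n w i)"

lemma admissible_imp_avoids_123: "admissible \<Longrightarrow> prefix_avoids_123 n w i"
  unfolding admissible_def using decreasing_prefix_imp_avoids_123 by blast

text \<open>Entries of W above l sit at positive positions, where bounded_ascents forces them to
  decrease.\<close>
lemma no_ascent_above_l:
  assumes "X \<in> sdom (Suc n)" "Y \<in> sdom (Suc n)" "X < Y" "l < W X"
  shows "\<not> W X < W Y"
proof
  assume less: "W X < W Y"
  obtain x where x: "x \<in> sdom n" "X = shift x" "0 < x" "l \<le> w x"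
    using W_gt_l[OF assms(1,4)] by blast
  obtain y where y: "y \<in> sdom n" "Y = shift y" "0 < y"
    using W_gt_l[OF assms(2)] less assms(4) by (metis order.strict_trans)
  have "x < y" "w x < w y"
    using x y assms(3) less shift_less_iff W_shift beta_less_beta_iff by simp_all
  then have "w x \<le> max_neg n w"
    using bounded_ascents x y unfolding bounded_ascents_def by (auto simp: sdom_iff)
  then show False
    using x l_gt by simp
qed

lemma neg_i_in_sdom: "- i \<in> sdom (Suc n)"
  using i_ge i_le by (simp add: sdom_iff)

lemma left_of_neg_i:
  assumes "X \<in> sdom (Suc n)" "X < - i"
  obtains k where "i \<le> k" "k \<le> int n" "X = shift (- k)"
  using assms i_ge by (intro that[of "- X - 1"]) (auto simp: shift_def sdom_iff)

lemma shift_left_of_neg_i: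
  assumes "i \<le> k" "k \<le> int n"
  shows "shift (- k) \<in> sdom (Suc n)" "shift (- k) < - i" "W (shift (- k)) < l"
proof -
  show "shift (- k) \<in> sdom (Suc n)" "shift (- k) < - i"
    using assms i_ge shift_in_sdom shift_less_neg_i_iff by (simp_all add: sdom_iff)
  show "W (shift (- k)) < l"
    using W_neg_shift[of k] le_max_neg[of k n w] assms i_ge l_gt beta_less l_ge by simp
qed

lemma W_shift_less_iff:
  "1 \<le> k \<Longrightarrow> k \<le> int n \<Longrightarrow> 1 \<le> k' \<Longrightarrow> k' \<le> int n \<Longrightarrow>
    W (shift (- k)) < W (shift (- k')) \<longleftrightarrow> w (- k) < w (- k')"
  by (simp add: W_neg_shift beta_less_beta_iff)

lemma no_ascent_left_of_neg_i:
  assumes dec: "decreasing_prefix n w i"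
    and "X \<in> sdom (Suc n)" "Y \<in> sdom (Suc n)" "X < Y" "Y < - i"
  shows "\<not> W X < W Y"
proof -
  obtain kx where kx: "i \<le> kx" "kx \<le> int n" "X = shift (- kx)"
    by (rule left_of_neg_i[of X]) (use assms in auto)
  obtain ky where ky: "i \<le> ky" "ky \<le> int n" "Y = shift (- ky)"
    by (rule left_of_neg_i[of Y]) (use assms in auto)
  note k = kx ky
  from k have "ky < kx"
    using assms(4) shift_less_iff by simp
  then show ?thesis
    using decreasing_prefixD[OF dec, of ky kx] k W_shift_less_iff[of kx ky] i_ge by simp
qed

lemma no_123_left_of_neg_i:
  assumes av: "prefix_avoids_123 n w i"
    and "X \<in> sdom (Suc n)" "Y \<in> sdom (Suc n)" "Z \<in> sdom (Suc n)" "X < Y" "Y < Z" "Z < - i"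
  shows "\<not> (W X < W Y \<and> W Y < W Z)"
proof -
  obtain kx where kx: "i \<le> kx" "kx \<le> int n" "X = shift (- kx)"
    by (rule left_of_neg_i[of X]) (use assms in auto)
  obtain ky where ky: "i \<le> ky" "ky \<le> int n" "Y = shift (- ky)"
    by (rule left_of_neg_i[of Y]) (use assms in auto)
  obtain kz where kz: "i \<le> kz" "kz \<le> int n" "Z = shift (- kz)"
    by (rule left_of_neg_i[of Z]) (use assms in auto)
  note k = kx ky kz
  from k have "kz < ky" "ky < kx"
    using assms(5,6) shift_less_iff by simp_all
  then show ?thesis
    using prefix_avoids_123D[OF av, of kz ky kx] k W_shift_less_iff i_ge by auto
qed

lemma no_occurrence_through_neg_i:
  assumes adm: admissible and occ: "occurrence_1234 (Suc n) W a b c d"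
  shows "- i \<notin> {a, b, c, d}"
proof
  have sd: "a \<in> sdom (Suc n)" "b \<in> sdom (Suc n)" "c \<in> sdom (Suc n)" "d \<in> sdom (Suc n)"
    and pos: "a < b" "b < c" "c < d" and val: "W a < W b" "W b < W c" "W c < W d"
    using occ by (simp_all add: occurrence_1234_def)
  assume "- i \<in> {a, b, c, d}"
  then consider "a = - i" | "b = - i" | "c = - i" | "d = - i" by blast
  then show False
  proof cases
    case 1
    then show False using no_ascent_above_l[of b c] sd pos val W_neg_i by simp
  next
    case 2
    then show False using no_ascent_above_l[of c d] sd pos val W_neg_i by simp
  next
    case 3
    have "l < W d" using val 3 W_neg_i by simp
    then have "l \<le> int n"
      by (elim W_gt_l[OF sd(4)])
    then have "decreasing_prefix n w i"
      using adm l_le unfolding admissible_def by auto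
    then show False
      using no_ascent_left_of_neg_i[of a b] sd pos val 3 by simp
  next
    case 4
    then show False
      using no_123_left_of_neg_i[OF admissible_imp_avoids_123[OF adm], of a b c] sd pos val by simp
  qed
qed

lemma occurrence_1234_shift:
  assumes "occurrence_1234 (Suc n) W (shift a) (shift b) (shift c) (shift d)"
    and "a \<in> sdom n" "b \<in> sdom n" "c \<in> sdom n" "d \<in> sdom n"
  shows "occurrence_1234 n w a b c d"
  using assms by (simp add: occurrence_1234_def shift_less_iff W_shift beta_less_beta_iff)

lemma admissible_imp_avoids: "admissible \<Longrightarrow> avoids_1234 (Suc n) W"
  unfolding avoids_1234_iff
proof (intro allI notI)
  fix a b c d
  assume adm: admissible and occ: "occurrence_1234 (Suc n) W a b c d"
  have "- i \<notin> {a, b, c, d}"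
    using no_occurrence_through_neg_i[OF adm occ] .
  moreover have "- i \<notin> {- d, - c, - b, - a}"
    using no_occurrence_through_neg_i[OF adm occurrence_1234_reflect[OF occ W_uminus]] .
  moreover have "a \<in> sdom (Suc n)" "b \<in> sdom (Suc n)" "c \<in> sdom (Suc n)" "d \<in> sdom (Suc n)"
    using occ by (simp_all add: occurrence_1234_def)
  ultimately obtain xa xb xc xd where
    "xa \<in> sdom n" "a = shift xa" "xb \<in> sdom n" "b = shift xb"
    "xc \<in> sdom n" "c = shift xc" "xd \<in> sdom n" "d = shift xd"
    by (metis insert_iff neg_equal_iff_equal sdom_Suc_cases)
  then have "occurrence_1234 n w xa xb xc xd"
    using occ occurrence_1234_shift by blast
  then show False
    using avoids by (simp add: avoids_1234_iff)
qed

lemma avoids_imp_decreasing_prefix: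
  assumes av: "avoids_1234 (Suc n) W" and "l \<le> int n"
  shows "decreasing_prefix n w i"
  unfolding decreasing_prefix_def
proof (intro allI impI, rule ccontr)
  fix a b assume ab: "i \<le> a" "a < b" "b \<le> int n" "\<not> w (- a) < w (- b)"
  moreover have "w (- a) \<noteq> w (- b)"
    using ab i_ge w_inj[of "- a" "- b"] by (auto simp: sdom_iff)
  ultimately have "w (- b) < w (- a)" by simp
  obtain x where x: "x \<in> sdom n" "w x = l"
    using signed_perm_onto[OF signed_perm, of l] assms(2) l_ge by (auto simp: sdom_iff)
  have "0 < x"
    using w_neg_le_max_neg[OF x(1)] x l_gt by (fastforce simp: sdom_iff)
  then have "- i < shift x"
    using shift_neg_iff[OF x(1)] i_ge by linarith
  moreover have "W (shift x) = l + 1"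
    using W_shift[OF x(1)] x(2) l_ge by (simp add: beta_def)
  ultimately have "occurrence_1234 (Suc n) W (shift (- b)) (shift (- a)) (- i) (shift x)"
    unfolding occurrence_1234_def
    using ab \<open>w (- b) < w (- a)\<close> shift_left_of_neg_i[of a] shift_left_of_neg_i[of b]
      W_shift_less_iff[of b a] i_ge neg_i_in_sdom shift_in_sdom[OF x(1)] W_neg_i
    by (simp add: shift_less_iff)
  then show False
    using av by (simp add: avoids_1234_iff)
qed

lemma avoids_imp_prefix_avoids_123:
  assumes av: "avoids_1234 (Suc n) W"
  shows "prefix_avoids_123 n w i"
  unfolding prefix_avoids_123_def
proof (intro notI, elim exE conjE)
  fix a b c assume abc: "i \<le> a" "a < b" "b < c" "c \<le> int n"
    "w (- c) < w (- b)" "w (- b) < w (- a)"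
  then have "occurrence_1234 (Suc n) W (shift (- c)) (shift (- b)) (shift (- a)) (- i)"
    unfolding occurrence_1234_def
    using shift_left_of_neg_i[of a] shift_left_of_neg_i[of b] shift_left_of_neg_i[of c]
      W_shift_less_iff[of c b] W_shift_less_iff[of b a] i_ge neg_i_in_sdom W_neg_i
    by (simp add: shift_less_iff)
  then show False
    using av by (simp add: avoids_1234_iff)
qed

lemma avoids_iff_admissible: "avoids_1234 (Suc n) W \<longleftrightarrow> admissible"
  using admissible_imp_avoids avoids_imp_decreasing_prefix avoids_imp_prefix_avoids_123 l_le
  unfolding admissible_def by fastforce

lemma W_in_sdom:
  assumes "X \<in> sdom (Suc n)" shows "W X \<in> sdom (Suc n)"
  using assms
proof (cases rule: sdom_Suc_cases)
  case (3 x)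
  then show ?thesis using W_shift beta_in_sdom w_in_sdom l_ge by simp
qed (use W_neg_i W_i l_ge l_le in \<open>auto simp: sdom_iff\<close>)

lemma abs_W_eq_l_iff:
  assumes "X \<in> sdom (Suc n)" shows "\<bar>W X\<bar> = l \<longleftrightarrow> X = - i \<or> X = i"
  using assms
  by (cases rule: sdom_Suc_cases)
    (use W_neg_i W_i l_ge W_shift abs_beta_neq i_ge shift_def in \<open>auto simp: sdom_iff\<close>)

lemma inj_on_W: "inj_on W (sdom (Suc n))"
proof
  fix X Y assume X: "X \<in> sdom (Suc n)" and Y: "Y \<in> sdom (Suc n)" and eq: "W X = W Y"
  show "X = Y"
  proof (cases "\<bar>W X\<bar> = l")
    case True
    then have "X \<in> {- i, i}" "Y \<in> {- i, i}"
      using abs_W_eq_l_iff[OF X] abs_W_eq_l_iff[OF Y] eq by auto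
    moreover have "W (- i) \<noteq> W i"
      using W_neg_i W_i l_ge by simp
    ultimately show ?thesis
      using eq by auto
  next
    case False
    then obtain x y where "x \<in> sdom n" "X = shift x" "y \<in> sdom n" "Y = shift y"
      using abs_W_eq_l_iff X Y eq by (metis sdom_Suc_cases)
    then show ?thesis
      using eq W_shift beta_eq_beta_iff w_inj by metis
  qed
qed

lemma W_signed_perm: "signed_perm (Suc n) W"
  by (rule signed_permI) (use inj_on_W W_in_sdom W_uminus W_outside in auto)

lemma card_W_pos: "card {p \<in> {1 .. int (Suc n)}. W p > 0} = j"
proof -
  have "{p \<in> {1 .. int (Suc n)}. W p > 0} = shift ` {p \<in> {1 .. int n}. w p > 0}"
  proof (intro equalityI subsetI)
    fix X assume X: "X \<in> {p \<in> {1 .. int (Suc n)}. W p > 0}"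
    then have "X \<in> sdom (Suc n)" by (auto simp: sdom_iff)
    then show "X \<in> shift ` {p \<in> {1 .. int n}. w p > 0}"
    proof (cases rule: sdom_Suc_cases)
      case (3 x)
      have "\<not> x < 0"
        using X 3 shift_neg_iff[OF 3(1)] by simp
      moreover have "0 < w x"
        using X 3 W_shift beta_pos_iff[OF l_ge] by simp
      ultimately have "x \<in> {p \<in> {1 .. int n}. w p > 0}"
        using 3(1) by (simp add: sdom_iff)
      with 3 show ?thesis by blast
    qed (use X i_ge W_i l_ge in simp_all)
  next
    fix X assume "X \<in> shift ` {p \<in> {1 .. int n}. w p > 0}"
    then obtain x where x: "1 \<le> x" "x \<le> int n" "0 < w x" "X = shift x" by auto
    then have "1 \<le> X" "X \<le> int (Suc n)"
      using i_ge by (auto simp: shift_def)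
    moreover have "0 < W X"
      using x W_shift[of x] beta_pos_iff[OF l_ge] by (simp add: sdom_iff)
    ultimately show "X \<in> {p \<in> {1 .. int (Suc n)}. W p > 0}" by simp
  qed
  moreover have "strict_mono shift"
    by (rule strict_monoI) (simp add: shift_less_iff)
  ultimately show ?thesis
    using in_B by (simp add: card_image strict_mono_imp_inj_on in_Bj1234_def)
qed

lemma max_neg_W: "max_neg (Suc n) W = l"
  by (rule max_neg_eqI[of _ _ _ i]) (use W_neg_le W_neg_i i_ge i_le l_ge in \<open>auto simp: sdom_iff\<close>)

lemma W_bounded_ascents: "bounded_ascents (Suc n) W"
  unfolding bounded_ascents_def max_neg_W
proof (intro allI impI)
  fix P Q assume PQ: "1 \<le> P" "P < Q" "Q \<le> int (Suc n)" "W P < W Q"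
  then have "P \<in> sdom (Suc n)" "Q \<in> sdom (Suc n)" by (auto simp: sdom_iff)
  with PQ show "W P \<le> l"
    using no_ascent_above_l[of P Q] by fastforce
qed

lemma W_in_B: "admissible \<Longrightarrow> in_Bj1234 j (Suc n) W"
  unfolding in_Bj1234_def using W_signed_perm card_W_pos admissible_imp_avoids by simp

lemma W_neg_above: "i < k \<Longrightarrow> k \<le> int n + 1 \<Longrightarrow> W (- k) = beta l (w (- (k - 1)))"
  using i_ge by (simp add: W_neg ins_neg_def)

lemma W_neg_below: "1 \<le> k \<Longrightarrow> k < i \<Longrightarrow> W (- k) = beta l (w (- k))"
  using i_le by (simp add: W_neg ins_neg_def)

lemma W_neg_less_l:
  assumes "1 \<le> k" "k \<le> int n + 1" "k \<noteq> i" shows "W (- k) < l"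
proof -
  have k: "- k \<in> sdom (Suc n)" "- k < 0"
    using assms by (simp_all add: sdom_iff)
  then have "W (- k) \<le> l"
    by (rule W_neg_le)
  moreover have "\<bar>W (- k)\<bar> \<noteq> l"
    using abs_W_eq_l_iff[OF k(1)] assms i_ge by auto
  ultimately show ?thesis
    using l_ge by auto
qed

lemma decreasing_prefix_W_above:
  assumes "i < I" shows "decreasing_prefix (Suc n) W I \<longleftrightarrow> decreasing_prefix n w (I - 1)"
proof
  assume dec: "decreasing_prefix (Suc n) W I"
  show "decreasing_prefix n w (I - 1)"
    unfolding decreasing_prefix_def
  proof (intro allI impI)
    fix a b assume ab: "I - 1 \<le> a" "a < b" "b \<le> int n"
    then have "W (- (a + 1)) < W (- (b + 1))"
      using decreasing_prefixD[OF dec, of "a + 1" "b + 1"] by simp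
    then show "w (- a) < w (- b)"
      using W_neg_above[of "a + 1"] W_neg_above[of "b + 1"] ab assms beta_less_beta_iff by simp
  qed
next
  assume dec: "decreasing_prefix n w (I - 1)"
  show "decreasing_prefix (Suc n) W I"
    unfolding decreasing_prefix_def
  proof (intro allI impI)
    fix a b assume ab: "I \<le> a" "a < b" "b \<le> int (Suc n)"
    then have "w (- (a - 1)) < w (- (b - 1))"
      using decreasing_prefixD[OF dec, of "a - 1" "b - 1"] by simp
    then show "W (- a) < W (- b)"
      using W_neg_above[of a] W_neg_above[of b] ab assms beta_less_beta_iff by simp
  qed
qed

lemma decreasing_prefix_W_imp_last:
  assumes dec: "decreasing_prefix (Suc n) W I" and "I \<le> i"
  shows "i = int n + 1"
proof (rule ccontr)
  assume last: "i \<noteq> int n + 1"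
  then have "W (- i) < W (- (i + 1))"
    using decreasing_prefixD[OF dec, of i "i + 1"] assms i_le by simp
  moreover have "W (- (i + 1)) < l"
    using W_neg_less_l[of "i + 1"] last i_ge i_le by simp
  ultimately show False
    using W_neg_i by simp
qed

lemma decreasing_prefix_W_upto:
  assumes "1 \<le> I" "I \<le> i"
  shows "decreasing_prefix (Suc n) W I \<longleftrightarrow> i = int n + 1 \<and> decreasing_prefix n w I"
proof
  assume dec: "decreasing_prefix (Suc n) W I"
  then have i: "i = int n + 1"
    using assms(2) by (rule decreasing_prefix_W_imp_last)
  have "w (- a) < w (- b)" if "I \<le> a" "a < b" "b \<le> int n" for a b
    using decreasing_prefixD[OF dec, of a b] W_neg_below[of a] W_neg_below[of b] that assms i
      beta_less_beta_iff by simp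
  with i show "i = int n + 1 \<and> decreasing_prefix n w I"
    by (simp add: decreasing_prefix_def)
next
  assume h: "i = int n + 1 \<and> decreasing_prefix n w I"
  have "W (- a) < W (- b)" if ab: "I \<le> a" "a < b" "b \<le> int (Suc n)" for a b
  proof (cases "b = i")
    case True
    then show ?thesis
      using W_neg_less_l[of a] ab assms h W_neg_i by simp
  next
    case False
    then have "w (- a) < w (- b)"
      using h decreasing_prefixD[of n w I a b] ab by simp
    then show ?thesis
      using W_neg_below[of a] W_neg_below[of b] ab assms h False beta_less_beta_iff by simp
  qed
  then show "decreasing_prefix (Suc n) W I"
    by (simp add: decreasing_prefix_def)
qed

lemma prefix_avoids_123_W_above:
  assumes "i < I" shows "prefix_avoids_123 (Suc n) W I \<longleftrightarrow> prefix_avoids_123 n w (I - 1)"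
proof
  assume av: "prefix_avoids_123 (Suc n) W I"
  show "prefix_avoids_123 n w (I - 1)"
    unfolding prefix_avoids_123_def
  proof (intro notI, elim exE conjE)
    fix a b c assume h: "I - 1 \<le> a" "a < b" "b < c" "c \<le> int n"
      "w (- c) < w (- b)" "w (- b) < w (- a)"
    then have "W (- (c + 1)) < W (- (b + 1))" "W (- (b + 1)) < W (- (a + 1))"
      using W_neg_above[of "a + 1"] W_neg_above[of "b + 1"] W_neg_above[of "c + 1"]
        assms beta_less_beta_iff by simp_all
    then show False
      using prefix_avoids_123D[OF av, of "a + 1" "b + 1" "c + 1"] h by simp
  qed
next
  assume av: "prefix_avoids_123 n w (I - 1)"
  show "prefix_avoids_123 (Suc n) W I"
    unfolding prefix_avoids_123_def
  proof (intro notI, elim exE conjE)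
    fix a b c assume h: "I \<le> a" "a < b" "b < c" "c \<le> int (Suc n)"
      "W (- c) < W (- b)" "W (- b) < W (- a)"
    then have "w (- (c - 1)) < w (- (b - 1))" "w (- (b - 1)) < w (- (a - 1))"
      using W_neg_above[of a] W_neg_above[of b] W_neg_above[of c] assms beta_less_beta_iff
      by simp_all
    then show False
      using prefix_avoids_123D[OF av, of "a - 1" "b - 1" "c - 1"] h by simp
  qed
qed

lemma W_neg_old:
  assumes "1 \<le> k" "k \<le> int n + 1" "k \<noteq> i"
  shows "W (- k) = beta l (w (- (if i < k then k - 1 else k)))"
  using assms W_neg_above W_neg_below by auto

lemma prefix_avoids_123_W_upto_imp:
  assumes I: "1 \<le> I" "I \<le> i" and av: "prefix_avoids_123 (Suc n) W I"
  shows "prefix_avoids_123 n w I" "decreasing_prefix n w i"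
proof -
  define new where "new k = (if i \<le> k then k + 1 else k)" for k
  have W_new: "W (- new k) = beta l (w (- k))" if "1 \<le> k" "k \<le> int n" for k
    using that W_neg_above[of "new k"] W_neg_below[of "new k"] by (auto simp: new_def)
  show "prefix_avoids_123 n w I"
    unfolding prefix_avoids_123_def
  proof (intro notI, elim exE conjE)
    fix a b c assume h: "I \<le> a" "a < b" "b < c" "c \<le> int n"
      "w (- c) < w (- b)" "w (- b) < w (- a)"
    have "I \<le> new a" "new a < new b" "new b < new c" "new c \<le> int (Suc n)"
      using h by (auto simp: new_def)
    moreover have "W (- new c) < W (- new b)" "W (- new b) < W (- new a)"
      using h I i_ge W_new[of a] W_new[of b] W_new[of c] beta_less_beta_iff by simp_all
    ultimately show False
      using prefix_avoids_123D[OF av] by blast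
  qed
  show "decreasing_prefix n w i"
    unfolding decreasing_prefix_def
  proof (intro allI impI, rule ccontr)
    fix a b assume ab: "i \<le> a" "a < b" "b \<le> int n" "\<not> w (- a) < w (- b)"
    moreover have "w (- a) \<noteq> w (- b)"
      using w_inj[of "- a" "- b"] ab i_ge by (auto simp: sdom_iff)
    ultimately have "w (- b) < w (- a)" by simp
    then have "W (- (b + 1)) < W (- (a + 1))"
      using ab W_neg_above[of "a + 1"] W_neg_above[of "b + 1"] beta_less_beta_iff by simp
    moreover have "W (- (a + 1)) < W (- i)"
      using W_neg_less_l[of "a + 1"] W_neg_i ab i_ge by simp
    ultimately show False
      using prefix_avoids_123D[OF av, of i "a + 1" "b + 1"] ab I by simp
  qed
qed

lemma prefix_avoids_123_W_uptoI:
  assumes I: "1 \<le> I" "I \<le> i" and av: "prefix_avoids_123 n w I" and dec: "decreasing_prefix n w i"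
  shows "prefix_avoids_123 (Suc n) W I"
  unfolding prefix_avoids_123_def
proof (intro notI, elim exE conjE)
  fix a b c assume p: "I \<le> a" "a < b" "b < c" "c \<le> int (Suc n)"
    "W (- c) < W (- b)" "W (- b) < W (- a)"
  consider "b = i \<or> c = i" | "a = i" | "i \<notin> {a, b, c}" by blast
  then show False
  proof cases
    case 1
    have "- a \<in> sdom (Suc n)" "- b \<in> sdom (Suc n)"
      using p I by (simp_all add: sdom_iff)
    then have "W (- a) \<le> l" "W (- b) \<le> l"
      using p I W_neg_le by simp_all
    then show False
      using 1 p W_neg_i by auto
  next
    case 2
    then have "w (- (c - 1)) < w (- (b - 1))"
      using p W_neg_above[of b] W_neg_above[of c] beta_less_beta_iff by simp
    then show False
      using decreasing_prefixD[OF dec, of "b - 1" "c - 1"] p 2 by simp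
  next
    case 3
    define old where "old k = (if i < k then k - 1 else k)" for k
    have "I \<le> old a" "old a < old b" "old b < old c" "old c \<le> int n"
      using p I 3 i_le by (auto simp: old_def)
    moreover have "w (- old c) < w (- old b)" "w (- old b) < w (- old a)"
      using p I 3 W_neg_old[of a] W_neg_old[of b] W_neg_old[of c] beta_less_beta_iff
      unfolding old_def by simp_all
    ultimately show False
      using prefix_avoids_123D[OF av] by blast
  qed
qed

lemma prefix_avoids_123_W_upto:
  assumes "1 \<le> I" "I \<le> i"
  shows "prefix_avoids_123 (Suc n) W I \<longleftrightarrow> prefix_avoids_123 n w I \<and> decreasing_prefix n w i"
  using assms prefix_avoids_123_W_upto_imp prefix_avoids_123_W_uptoI by blast

lemma prefix_thresholds_W:
  assumes th: "prefix_thresholds n w tx ty" and adm: admissible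
  shows "prefix_thresholds (Suc n) W
           (if i = int n + 1 then tx else if tx \<le> i then i + 1 else tx + 1)
           (if tx \<le> i then ty else i + 1)"
proof -
  have tx: "1 \<le> tx" "tx \<le> int n + 1"
      "\<And>I. 1 \<le> I \<Longrightarrow> I \<le> int n + 1 \<Longrightarrow> decreasing_prefix n w I \<longleftrightarrow> tx \<le> I"
    and ty: "1 \<le> ty" "ty \<le> int n + 1"
      "\<And>I. 1 \<le> I \<Longrightarrow> I \<le> int n + 1 \<Longrightarrow> prefix_avoids_123 n w I \<longleftrightarrow> ty \<le> I"
    using th by (auto simp: prefix_thresholds_def)
  have "ty \<le> i"
    using admissible_imp_avoids_123[OF adm] ty(3) i_ge i_le by simp
  have dec: "decreasing_prefix (Suc n) W I \<longleftrightarrow>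
      (if i = int n + 1 then tx else if tx \<le> i then i + 1 else tx + 1) \<le> I"
    if "1 \<le> I" "I \<le> int (Suc n) + 1" for I
  proof (cases "i < I")
    case True
    then show ?thesis
      using decreasing_prefix_W_above[OF True] tx(3)[of "I - 1"] that tx(1,2) i_ge i_le by auto
  next
    case False
    then show ?thesis
      using decreasing_prefix_W_upto[of I] tx(3)[of I] that tx(1,2) i_le by auto
  qed
  have avoid: "prefix_avoids_123 (Suc n) W I \<longleftrightarrow> (if tx \<le> i then ty else i + 1) \<le> I"
    if "1 \<le> I" "I \<le> int (Suc n) + 1" for I
  proof (cases "i < I")
    case True
    then show ?thesis
      using prefix_avoids_123_W_above[OF True] ty(3)[of "I - 1"] that \<open>ty \<le> i\<close> i_ge
      by auto
  next
    case False
    then show ?thesis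
      using prefix_avoids_123_W_upto[of I] ty(3)[of I] tx(3)[of i] that i_ge i_le by auto
  qed
  show ?thesis
    unfolding prefix_thresholds_def using dec avoid tx(1,2) ty(1,2) \<open>ty \<le> i\<close> i_ge i_le
    by auto
qed

lemma label_W:
  assumes "prefix_thresholds n w tx ty" and admissible
  shows "label (Suc n) W = child_label (int n) tx ty (i, l)"
  using label_eq[OF prefix_thresholds_W[OF assms]] max_neg_W
  by (simp add: child_label_def)

lemma admissible_iff_site:
  assumes "prefix_thresholds n w tx ty"
  shows "admissible \<longleftrightarrow> (i, l) \<in> admissible_sites (int n) tx ty (max_neg n w)"
  using assms i_ge i_le l_gt l_le
  unfolding admissible_def admissible_sites_def prefix_thresholds_def by auto

end

section \<open>The children of a vertex and their labels\<close>

context tree_node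
begin

lemma insertionI:
  "1 \<le> i \<Longrightarrow> i \<le> int n + 1 \<Longrightarrow> max_neg n w < l \<Longrightarrow> l \<le> int n + 1 \<Longrightarrow> insertion j n w i l"
  using in_B bounded_ascents
  by (simp add: insertion_def insertion_axioms_def tree_node_def)

lemma BT_children_eq:
  assumes th: "prefix_thresholds n w tx ty"
  shows "BT_children j (n, w) =
           (\<lambda>(i, l). ins_perm n w i l) ` admissible_sites (int n) tx ty (max_neg n w)"
proof -
  have "avoids_1234 (Suc n) (snd (ins_perm n w i l)) \<longleftrightarrow>
          (i, l) \<in> admissible_sites (int n) tx ty (max_neg n w)"
    if "1 \<le> i" "i \<le> int n + 1" "max_neg n w < l" "l \<le> int n + 1" for i l
  proof -
    interpret insertion j n w i l
      using that by (rule insertionI)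
    show ?thesis
      using avoids_iff_admissible admissible_iff_site[OF th] by (simp add: W_def)
  qed
  then show ?thesis
    using in_B unfolding BT_children_def admissible_sites_def by auto
qed

lemma tree_node_children:
  assumes "c \<in> BT_children j (n, w)" shows "case_prod (tree_node j) c"
proof -
  obtain tx ty where th: "prefix_thresholds n w tx ty"
    using prefix_thresholds_exist by blast
  then obtain i l where c: "c = ins_perm n w i l"
      and site: "(i, l) \<in> admissible_sites (int n) tx ty (max_neg n w)"
    using assms BT_children_eq by auto
  interpret insertion j n w i l
    using site by (intro insertionI) (auto simp: admissible_sites_def)
  have admissible
    using site admissible_iff_site[OF th] by simp
  then show ?thesis
    using W_in_B W_bounded_ascents c
    by (simp add: tree_node_def W_def ins_perm_def)
qed

lemma bij_betw_label_children:
  "bij_betw (case_prod label) (BT_children j (n, w)) (suc_lab (label n w))"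
proof -
  obtain tx ty where th: "prefix_thresholds n w tx ty"
    using prefix_thresholds_exist by blast
  define S where "S = admissible_sites (int n) tx ty (max_neg n w)"
  have label_child: "label (Suc n) (snd (ins_perm n w i l)) = child_label (int n) tx ty (i, l)"
    if "(i, l) \<in> S" for i l
  proof -
    interpret insertion j n w i l
      using that by (intro insertionI) (auto simp: S_def admissible_sites_def)
    show ?thesis
      using label_W[OF th] admissible_iff_site[OF th] that by (simp add: S_def W_def)
  qed
  let ?ins = "\<lambda>(i, l). ins_perm n w i l"
  have comp: "(case_prod label \<circ> ?ins) p = child_label (int n) tx ty p" if "p \<in> S" for p
    using label_child that by (cases p) (simp add: ins_perm_def)
  have t: "1 \<le> ty" "ty \<le> tx" "tx \<le> int n + 1"
    using th prefix_thresholds_le[OF th] by (auto simp: prefix_thresholds_def)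
  have m: "0 \<le> max_neg n w" "max_neg n w \<le> int n"
    using max_neg_nonneg max_neg_le[OF signed_perm] by auto
  have image: "child_label (int n) tx ty ` S
                 = suc_aux (int n + 2 - tx) (int n + 2 - ty) (nat (int n + 1 - max_neg n w))"
    unfolding S_def using t m by (rule child_label_image)
  have "inj_on (child_label (int n) tx ty) S"
    unfolding S_def using t by (rule inj_on_child_label)
  then have "inj_on (case_prod label \<circ> ?ins) S"
    using comp inj_on_cong by blast
  moreover have "suc_lab (label n w) = case_prod label ` ?ins ` S"
    using label_eq[OF th] m image comp by (simp add: suc_lab_def image_comp)
  ultimately show ?thesis
    unfolding BT_children_eq[OF th] S_def[symmetric] bij_betw_def
    by (simp add: inj_on_imageI)
qed

end

lemma BT_root_eq:
  "BT_root j = (j, \<lambda>x. if x \<in> sdom j then (if x < 0 then - (int j + 1) - x else int j + 1 - x) else x)"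
  by (auto simp: BT_root_def sdom_iff)

lemma tree_node_root: "case_prod (tree_node j) (BT_root j)"
proof -
  define r where "r = snd (BT_root j)"
  have r: "r x = (if x \<in> sdom j then (if x < 0 then - (int j + 1) - x else int j + 1 - x) else x)" for x
    by (simp add: r_def BT_root_eq)
  have "signed_perm j r"
    by (rule signed_permI) (auto simp: r sdom_iff intro!: inj_onI split: if_splits)
  moreover have "avoids_1234 j r"
    unfolding avoids_1234_def by (auto simp: r sdom_iff split: if_splits)
  moreover have "{p \<in> {1 .. int j}. r p > 0} = {1 .. int j}"
    by (auto simp: r sdom_iff)
  moreover have "bounded_ascents j r"
    unfolding bounded_ascents_def by (auto simp: r sdom_iff)
  ultimately show ?thesis
    by (simp add: tree_node_def in_Bj1234_def BT_root_def r_def)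
qed

lemma label_root: "case_prod label (BT_root j) = (int j + 1, int j + 1, int j + 1)"
proof -
  define r where "r = snd (BT_root j)"
  have "max_neg j r = 0"
    unfolding max_neg_eq_Max by (rule Max_eqI) (auto simp: r_def BT_root_def)
  moreover have "decreasing_prefix j r I" if "1 \<le> I" for I
    using that unfolding decreasing_prefix_def by (auto simp: r_def BT_root_def)
  then have "prefix_thresholds j r 1 1"
    by (auto simp: prefix_thresholds_def decreasing_prefix_imp_avoids_123)
  ultimately show ?thesis
    using label_eq by (simp add: r_def BT_root_def)
qed

theorem proposition2p7:
  fixes j :: nat
  shows "rooted_tree_iso (T_tree j) [(int j + 1, int j + 1, int j + 1)]
                         (BT_tree j) [BT_root j]"
proof -
  interpret tree_relabelling "BT_root j" "BT_children j" "(int j + 1, int j + 1, int j + 1)" suc_lab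
    "case_prod (tree_node j)" "case_prod label"
  proof
    fix v c assume v: "case_prod (tree_node j) v"
    then show "c \<in> BT_children j v \<Longrightarrow> case_prod (tree_node j) c"
      by (cases v) (simp add: tree_node.tree_node_children)
    show "bij_betw (case_prod label) (BT_children j v) (suc_lab (case_prod label v))"
      using v by (cases v) (simp add: tree_node.bij_betw_label_children)
  qed (fact tree_node_root label_root)+
  show ?thesis
    unfolding T_tree_def BT_tree_def by (rule rooted_tree_iso_gen_tree)
qed

end
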